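(* Let $\nu\in(0,1]$ and $\alpha\in(0,2]$. Then $$L_{\alpha,\nu}\stackrel{d}{=}\Lambda\cdot Z_{\nu,1}^{-1/\alpha}\cdot\sqrt{R_{\alpha/2}},$$ where $\Lambda$, $Z_{\nu,1}$, $R_{\alpha/2}$ are independent.
   Context: $\stackrel{d}{=}$ denotes equality in distribution. $\Lambda$ is a random variable with the Laplace density $\tfrac12e^{-|x|}$, $x\in\mathbb{R}$. For $\alpha\in(0,2]$, $\nu>0$, $L_{\alpha,\nu}$ denotes a random variable with characteristic function $(1+|t|^{\alpha})^{-\nu}$. For $\delta\in(0,1]$, $S_{\delta,1}$ denotes a one-sided strictly stable random variable with Laplace transform $\mathsf{E}e^{-sS_{\delta,1}}=e^{-s^\delta}$, $s\ge0$ (with $S_{1,1}\equiv1$), and $R_\delta=S_{\delta,1}/S'_{\delta,1}$ where $S_{\delta,1},S'_{\delta,1}$ are independent copies; for $\delta<1$ its density is $\frac{\sin(\pi\delta)x^{\delta-1}}{\pi[1+x^{2\delta}+2x^\delta\cos(\pi\delta)]}$, $x>0$. For $r\in(0,1)$, $Z_{r,1}=(G_{r,1}+G_{1-r,1})/G_{r,1}$ with $G_{r,1},G_{1-r,1}$ independent gamma random variables of shapes $r,1-r$ and unit scale; $Z_{1,1}\equiv1$. *)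

theory Defs
  imports "HOL-Probability.Probability"
begin

definition laplace_density :: "real \<Rightarrow> ennreal" where
  "laplace_density x = ennreal (exp (- \<bar>x\<bar>) / 2)"

definition gamma_dist :: "real \<Rightarrow> real measure" where
  "gamma_dist r = density lborel
     (\<lambda>x. if 0 < x then ennreal (x powr (r - 1) * exp (- x) / Gamma r) else 0)"

definition Z_dist :: "real \<Rightarrow> real measure" where
  "Z_dist r = (if r = 1 then return borel 1
     else distr (gamma_dist r \<Otimes>\<^sub>M gamma_dist (1 - r)) borel
            (\<lambda>(g1, g2). (g1 + g2) / g1))"

definition one_sided_stable :: "real \<Rightarrow> real measure \<Rightarrow> bool" where
  "one_sided_stable \<delta> \<mu> \<longleftrightarrow> prob_space \<mu> \<and> sets \<mu> = sets borel \<and>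
     (AE x in \<mu>. 0 \<le> x) \<and>
     (\<forall>s\<ge>0. (\<integral>x. exp (- (s * x)) \<partial>\<mu>) = exp (- (s powr \<delta>)))"

definition R_dist :: "real measure \<Rightarrow> real measure" where
  "R_dist \<mu> = distr (\<mu> \<Otimes>\<^sub>M \<mu>) borel (\<lambda>(x, y). x / y)"


end

theory Submission
  imports Defs
begin

text \<open>Given \<open>W = Z powr (- 1 / \<alpha>) * sqrt R\<close>, the product \<open>\<Lambda> W\<close> is a Laplace variable with scale
  \<open>W\<close>, so its characteristic function is \<open>E [1 / (1 + t\<^sup>2 W\<^sup>2)]\<close>. This expectation is computed
  by writing each ratio as a Laplace integral, \<open>b / (a + b) = \<integral>\<^sub>0\<^sup>\<infinity> b exp (- l (a + b)) dl\<close>, and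
  integrating out the independent factors under the integral sign. For \<open>R = S / S'\<close> the Laplace
  transform \<open>exp (- s powr (\<alpha> / 2))\<close> of \<open>S\<close> gives \<open>E [1 / (1 + u R)] = 1 / (1 + u powr (\<alpha> / 2))\<close>,
  i.e. \<open>E [1 / (1 + t\<^sup>2 W\<^sup>2) | Z] = 1 / (1 + \<bar>t\<bar> powr \<alpha> / Z)\<close>; for \<open>Z = (G + G') / G\<close> the Laplace
  transforms of the two gamma variables give \<open>E [1 / (1 + c / Z)] = (1 + c) powr (- \<nu>)\<close>.\<close>

lemma nn_integral_FTC_einterval:
  fixes F f :: "real \<Rightarrow> real" and a b :: ereal
  assumes ab: "a < b"
    and F: "\<And>x. a < ereal x \<Longrightarrow> ereal x < b \<Longrightarrow> DERIV F x :> f x"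
    and f: "\<And>x. a < ereal x \<Longrightarrow> ereal x < b \<Longrightarrow> isCont f x"
    and nonneg: "\<And>x. a < ereal x \<Longrightarrow> ereal x < b \<Longrightarrow> 0 \<le> f x"
    and A: "((F \<circ> real_of_ereal) \<longlongrightarrow> A) (at_right a)"
    and B: "((F \<circ> real_of_ereal) \<longlongrightarrow> B) (at_left b)"
  shows "(\<integral>\<^sup>+x. ennreal (f x) * indicator (einterval a b) x \<partial>lborel) = ennreal (B - A)"
proof -
  have "AE x in lborel. a < ereal x \<longrightarrow> ereal x < b \<longrightarrow> 0 \<le> f x"
    using nonneg by auto
  note FTC = interval_integral_FTC_nonneg[OF ab F f this A B]
  have "(\<integral>\<^sup>+x. ennreal (f x) * indicator (einterval a b) x \<partial>lborel)
      = (\<integral>\<^sup>+x. ennreal (indicator (einterval a b) x * f x) \<partial>lborel)"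
    by (intro nn_integral_cong) (auto split: split_indicator)
  also have "\<dots> = ennreal (LINT x|lborel. indicator (einterval a b) x * f x)"
    using FTC(1) nonneg unfolding set_integrable_def
    by (intro nn_integral_eq_integral) (auto split: split_indicator simp: einterval_def)
  also have "(LINT x|lborel. indicator (einterval a b) x * f x) = B - A"
    using FTC(2) ab
    unfolding interval_lebesgue_integral_def set_lebesgue_integral_def by (simp add: less_imp_le)
  finally show ?thesis .
qed

lemma nn_integral_FTC_Ioi:
  fixes F f :: "real \<Rightarrow> real"
  assumes "\<And>x. a < x \<Longrightarrow> DERIV F x :> f x"
    and "\<And>x. a < x \<Longrightarrow> isCont f x"
    and "\<And>x. a < x \<Longrightarrow> 0 \<le> f x"
    and "(F \<longlongrightarrow> A) (at_right a)"
    and "(F \<longlongrightarrow> B) at_top"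
  shows "(\<integral>\<^sup>+x. ennreal (f x) * indicator {a<..} x \<partial>lborel) = ennreal (B - A)"
proof -
  have "einterval (ereal a) \<infinity> = {a<..}" by (auto simp: einterval_def)
  moreover have "(\<integral>\<^sup>+x. ennreal (f x) * indicator (einterval (ereal a) \<infinity>) x \<partial>lborel) = ennreal (B - A)"
    by (rule nn_integral_FTC_einterval) (use assms in \<open>auto simp: ereal_tendsto_simps\<close>)
  ultimately show ?thesis by simp
qed

lemma nn_integral_FTC_Ioo:
  fixes F f :: "real \<Rightarrow> real"
  assumes "a < b"
    and "\<And>x. a < x \<Longrightarrow> x < b \<Longrightarrow> DERIV F x :> f x"
    and "\<And>x. a < x \<Longrightarrow> x < b \<Longrightarrow> isCont f x"
    and "\<And>x. a < x \<Longrightarrow> x < b \<Longrightarrow> 0 \<le> f x"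
    and "(F \<longlongrightarrow> A) (at_right a)"
    and "(F \<longlongrightarrow> B) (at_left b)"
  shows "(\<integral>\<^sup>+x. ennreal (f x) * indicator {a<..<b} x \<partial>lborel) = ennreal (B - A)"
proof -
  have "einterval (ereal a) (ereal b) = {a<..<b}" by (auto simp: einterval_def)
  moreover have "(\<integral>\<^sup>+x. ennreal (f x) * indicator (einterval (ereal a) (ereal b)) x \<partial>lborel)
      = ennreal (B - A)"
    by (rule nn_integral_FTC_einterval) (use assms in \<open>auto simp: ereal_tendsto_simps\<close>)
  ultimately show ?thesis by simp
qed

lemma AE_distr_pair_measure:
  fixes P Q :: "real measure" and f :: "real \<times> real \<Rightarrow> real"
  assumes "sigma_finite_measure P" "sigma_finite_measure Q"
    and [measurable_cong]: "sets P = sets borel" "sets Q = sets borel"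
    and [measurable]: "f \<in> borel_measurable (borel \<Otimes>\<^sub>M borel)" "Measurable.pred borel C"
    and "AE x in P. A x" "AE y in Q. B y" "\<And>x y. A x \<Longrightarrow> B y \<Longrightarrow> C (f (x, y))"
  shows "AE z in distr (P \<Otimes>\<^sub>M Q) borel f. C z"
proof -
  have PQ: "pair_sigma_finite P Q"
    using assms(1,2) by (simp add: pair_sigma_finite_def)
  have sets_PQ: "sets (P \<Otimes>\<^sub>M Q) = sets (borel \<Otimes>\<^sub>M borel)"
    by (rule sets_pair_measure_cong) (simp_all add: assms(3,4))
  have f: "f \<in> P \<Otimes>\<^sub>M Q \<rightarrow>\<^sub>M borel"
    unfolding measurable_cong_sets[OF sets_PQ refl] by measurable
  have "{p \<in> space (P \<Otimes>\<^sub>M Q). C (f p)} \<in> sets (P \<Otimes>\<^sub>M Q)"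
    unfolding sets_PQ sets_eq_imp_space_eq[OF sets_PQ] by measurable
  moreover have "AE x in P. AE y in Q. C (f (x, y))"
    using assms(7) by eventually_elim (use assms(8) in \<open>auto elim!: eventually_mono intro: assms(9)\<close>)
  ultimately have "AE p in P \<Otimes>\<^sub>M Q. C (f p)"
    using pair_sigma_finite.AE_pair_iff[OF PQ, of "\<lambda>x y. C (f (x, y))"] by simp
  then show ?thesis
    by (subst AE_distr_iff[OF f]) simp_all
qed

lemma nn_integral_rotate_Fubini:
  fixes h :: "'a \<Rightarrow> 'b \<Rightarrow> 'c \<Rightarrow> ennreal"
  assumes M: "sigma_finite_measure M" and N: "sigma_finite_measure N" and L: "sigma_finite_measure L"
    and h [measurable]: "(\<lambda>(x, y, l). h x y l) \<in> borel_measurable (M \<Otimes>\<^sub>M N \<Otimes>\<^sub>M L)"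
  shows "(\<integral>\<^sup>+x. \<integral>\<^sup>+y. \<integral>\<^sup>+l. h x y l \<partial>L \<partial>N \<partial>M) = (\<integral>\<^sup>+l. \<integral>\<^sup>+x. \<integral>\<^sup>+y. h x y l \<partial>N \<partial>M \<partial>L)"
proof -
  interpret N: sigma_finite_measure N by (rule N)
  have NxL: "pair_sigma_finite N L" and MxL: "pair_sigma_finite M L"
    using M N L by (simp_all add: pair_sigma_finite_def)
  have "(\<lambda>p. (fst (fst p), snd p, snd (fst p))) \<in> (M \<Otimes>\<^sub>M L) \<Otimes>\<^sub>M N \<rightarrow>\<^sub>M M \<Otimes>\<^sub>M N \<Otimes>\<^sub>M L"
    by measurable
  from measurable_compose[OF this h]
  have [measurable]: "(\<lambda>p. h (fst (fst p)) (snd p) (snd (fst p))) \<in> borel_measurable ((M \<Otimes>\<^sub>M L) \<Otimes>\<^sub>M N)"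
    by simp
  have "(\<integral>\<^sup>+y. \<integral>\<^sup>+l. h x y l \<partial>L \<partial>N) = (\<integral>\<^sup>+l. \<integral>\<^sup>+y. h x y l \<partial>N \<partial>L)" if "x \<in> space M" for x
    using that by (intro pair_sigma_finite.Fubini'[OF NxL, of "\<lambda>y l. h x y l", symmetric]) measurable
  then have "(\<integral>\<^sup>+x. \<integral>\<^sup>+y. \<integral>\<^sup>+l. h x y l \<partial>L \<partial>N \<partial>M) = (\<integral>\<^sup>+x. \<integral>\<^sup>+l. \<integral>\<^sup>+y. h x y l \<partial>N \<partial>L \<partial>M)"
    by (intro nn_integral_cong) simp
  also have "\<dots> = (\<integral>\<^sup>+l. \<integral>\<^sup>+x. \<integral>\<^sup>+y. h x y l \<partial>N \<partial>M \<partial>L)"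
    by (intro pair_sigma_finite.Fubini'[OF MxL, of "\<lambda>x l. \<integral>\<^sup>+y. h x y l \<partial>N", symmetric]
        N.borel_measurable_nn_integral) measurable
  finally show ?thesis .
qed

lemma (in prob_space) indep_vars_three_split:
  fixes X Y Z :: "'a \<Rightarrow> real"
  assumes ind: "indep_vars (\<lambda>_. borel) (\<lambda>i. [X, Y, Z] ! i) {0, 1, 2 :: nat}"
    and f: "(\<lambda>(y, z). f y z) \<in> borel_measurable (borel \<Otimes>\<^sub>M borel)"
  shows "indep_var borel X borel (\<lambda>\<omega>. f (Y \<omega>) (Z \<omega>))" and "indep_var borel Y borel Z"
proof -
  let ?V = "\<lambda>I \<omega>. restrict (\<lambda>i. ([X, Y, Z] ! i) \<omega>) I"
  have comp: "(\<lambda>g. g i) \<in> PiM I (\<lambda>_. borel) \<rightarrow>\<^sub>M (borel :: real measure)" if "i \<in> I" for i I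
    using that by (rule measurable_component_singleton)
  have "(\<lambda>g. (g 1, g 2)) \<in> PiM {1, 2 :: nat} (\<lambda>_. borel) \<rightarrow>\<^sub>M borel \<Otimes>\<^sub>M borel"
    by (intro measurable_Pair comp) auto
  from measurable_compose[OF this f]
  have "(\<lambda>g. f (g 1) (g 2)) \<in> PiM {1, 2 :: nat} (\<lambda>_. borel) \<rightarrow>\<^sub>M (borel :: real measure)"
    by simp
  with indep_var_restrict[OF ind, of "{0}" "{1, 2}"] comp[of 0 "{0}"]
  have "indep_var borel ((\<lambda>g. g 0) \<circ> ?V {0}) borel ((\<lambda>g. f (g 1) (g 2)) \<circ> ?V {1, 2})"
    by (intro indep_var_compose) auto
  then show "indep_var borel X borel (\<lambda>\<omega>. f (Y \<omega>) (Z \<omega>))"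
    by (simp add: o_def numeral_2_eq_2)
  from indep_var_restrict[OF ind, of "{1}" "{2}"] comp[of 1 "{1}"] comp[of 2 "{2}"]
  have "indep_var borel ((\<lambda>g. g 1) \<circ> ?V {1}) borel ((\<lambda>g. g 2) \<circ> ?V {2})"
    by (intro indep_var_compose) auto
  then show "indep_var borel Y borel Z"
    by (simp add: o_def numeral_2_eq_2)
qed

section \<open>Elementary improper integrals\<close>

lemma exp_neg_mult_at_top:
  fixes K :: real
  assumes "0 < K"
  shows "((\<lambda>x. exp (- (x * K))) \<longlongrightarrow> 0) at_top"
proof -
  have "filterlim (\<lambda>x. x * K) at_top at_top"
    by (rule filterlim_at_top_mult_tendsto_pos[OF tendsto_const assms filterlim_ident])
  then show ?thesis
    using filterlim_compose[OF exp_at_bot filterlim_compose[OF filterlim_uminus_at_bot_at_top]] by blast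
qed

lemma exp_neg_powr_at_top:
  fixes d a :: real
  assumes "0 < d" "0 < a"
  shows "((\<lambda>x. exp (- (a * x powr d))) \<longlongrightarrow> 0) at_top"
proof -
  have "filterlim (\<lambda>x. a * x powr d) at_top at_top"
    using filterlim_tendsto_pos_mult_at_top[OF tendsto_const \<open>0 < a\<close> real_powr_at_top[OF \<open>0 < d\<close>]]
    by simp
  then show ?thesis
    using filterlim_compose[OF exp_at_bot filterlim_compose[OF filterlim_uminus_at_bot_at_top]] by blast
qed

lemma powr_at_right_0:
  fixes d :: real
  assumes "0 < d"
  shows "((\<lambda>x. x powr d) \<longlongrightarrow> 0) (at_right 0)"
  by (rule tendsto_zero_powrI[OF tendsto_ident_at tendsto_const _ assms])
     (auto simp: eventually_at_right_less eventually_at_filter)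

lemma nn_integral_exp_Ioi:
  fixes K C :: real
  assumes "0 < K" "0 \<le> C"
  shows "(\<integral>\<^sup>+l. ennreal (C * exp (- (l * K))) * indicator {0<..} l \<partial>lborel) = ennreal (C / K)"
proof -
  have "(\<integral>\<^sup>+l. ennreal (C * exp (- (l * K))) * indicator {0<..} l \<partial>lborel) = ennreal (0 - (- C / K))"
  proof (rule nn_integral_FTC_Ioi[where F = "\<lambda>l. - C / K * exp (- (l * K))"])
    show "((\<lambda>l. - C / K * exp (- (l * K))) has_real_derivative C * exp (- (x * K))) (at x)" for x
      using assms by (auto intro!: derivative_eq_intros)
    have "((\<lambda>l. - C / K * exp (- (l * K))) \<longlongrightarrow> - C / K * exp (- (0 * K))) (at_right 0)"
      by (intro tendsto_intros)
    then show "((\<lambda>l. - C / K * exp (- (l * K))) \<longlongrightarrow> - C / K) (at_right 0)" by simp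
    show "((\<lambda>l. - C / K * exp (- (l * K))) \<longlongrightarrow> 0) at_top"
      using tendsto_mult[OF tendsto_const exp_neg_mult_at_top[OF \<open>0 < K\<close>], of "- C / K"] by simp
  qed (use assms in \<open>auto intro!: continuous_intros\<close>)
  then show ?thesis by simp
qed

lemma nn_integral_exp_Ioo:
  fixes y m :: real
  assumes "0 \<le> y" "0 < m"
  shows "(\<integral>\<^sup>+l. ennreal (y * exp (- (l * y))) * indicator {0<..<m} l \<partial>lborel)
       = ennreal (1 - exp (- (m * y)))"
proof -
  have "(\<integral>\<^sup>+l. ennreal (y * exp (- (l * y))) * indicator {0<..<m} l \<partial>lborel)
      = ennreal (- exp (- (m * y)) - (- exp (- (0 * y))))"
  proof (rule nn_integral_FTC_Ioo[OF \<open>0 < m\<close>, where F = "\<lambda>l. - exp (- (l * y))"])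
    show "((\<lambda>l. - exp (- (l * y))) \<longlongrightarrow> - exp (- (0 * y))) (at_right 0)"
      by (intro tendsto_intros)
  qed (use assms in \<open>auto intro!: derivative_eq_intros continuous_intros tendsto_intros\<close>)
  then show ?thesis by simp
qed

lemma nn_integral_Gamma_Ioi:
  fixes a b :: real
  assumes a: "0 < a" and b: "0 < b"
  shows "(\<integral>\<^sup>+x. ennreal (x powr (a - 1) * exp (- (b * x))) * indicator {0<..} x \<partial>lborel)
       = ennreal (Gamma a * b powr (- a))"
proof -
  define g where "g = (\<lambda>t::real. ennreal (indicator {0..} t * t powr (a - 1) / exp t))"
  define I where "I = (\<integral>\<^sup>+x. ennreal (x powr (a - 1) * exp (- (b * x))) * indicator {0<..} x \<partial>lborel)"
  have "ennreal (Gamma a) = integral\<^sup>N lborel g"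
    unfolding g_def by (rule Gamma_conv_nn_integral_real[OF a])
  also have "\<dots> = ennreal b * (\<integral>\<^sup>+x. g (0 + b * x) \<partial>lborel)"
    using nn_integral_real_affine[of g b 0] b unfolding g_def by simp
  also have "(\<integral>\<^sup>+x. g (0 + b * x) \<partial>lborel)
      = (\<integral>\<^sup>+x. ennreal (b powr (a - 1))
            * (ennreal (x powr (a - 1) * exp (- (b * x))) * indicator {0<..} x) \<partial>lborel)"
  proof (intro nn_integral_cong)
    fix x :: real
    show "g (0 + b * x) = ennreal (b powr (a - 1))
        * (ennreal (x powr (a - 1) * exp (- (b * x))) * indicator {0<..} x)"
      using b by (cases "0 < x")
        (auto simp: g_def indicator_def powr_mult ennreal_mult'[symmetric] exp_minus field_simps
          zero_le_mult_iff)
  qed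
  also have "\<dots> = ennreal (b powr (a - 1)) * I"
    unfolding I_def by (rule nn_integral_cmult) measurable
  finally have "ennreal (Gamma a) = ennreal (b * b powr (a - 1)) * I"
    using b by (simp add: ennreal_mult' mult.assoc)
  also have "b * b powr (a - 1) = b powr a"
    using b by (simp add: powr_diff)
  finally have I: "ennreal (Gamma a) = ennreal (b powr a) * I" .
  have "ennreal (Gamma a * b powr (- a)) = ennreal (b powr (- a)) * ennreal (Gamma a)"
    using a by (simp add: ennreal_mult' Gamma_real_pos mult.commute less_imp_le)
  also have "\<dots> = ennreal (b powr (- a) * b powr a) * I"
    unfolding I using b by (simp add: ennreal_mult' mult.assoc)
  finally show ?thesis unfolding I_def using b by (simp add: powr_minus)
qed

lemma nn_integral_weibull_tail:
  fixes d a l :: real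
  assumes "0 < d" "0 < a" "0 < l"
  shows "(\<integral>\<^sup>+m. ennreal (d * a * m powr (d - 1) * exp (- (a * m powr d))) * indicator {l<..} m \<partial>lborel)
       = ennreal (exp (- (a * l powr d)))"
proof -
  have "(\<integral>\<^sup>+m. ennreal (d * a * m powr (d - 1) * exp (- (a * m powr d))) * indicator {l<..} m \<partial>lborel)
      = ennreal (0 - (- exp (- (a * l powr d))))"
  proof (rule nn_integral_FTC_Ioi[where F = "\<lambda>m. - exp (- (a * m powr d))"])
    fix x :: real assume "l < x"
    with assms have x: "0 < x" by simp
    show "((\<lambda>m. - exp (- (a * m powr d))) has_real_derivative
        d * a * x powr (d - 1) * exp (- (a * x powr d))) (at x)"
      using x by (auto intro!: derivative_eq_intros has_real_derivative_powr simp: algebra_simps)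
    show "isCont (\<lambda>m. d * a * m powr (d - 1) * exp (- (a * m powr d))) x"
      using x by (intro continuous_intros) auto
  next
    have "isCont (\<lambda>m. - exp (- (a * m powr d))) l"
      using assms by (intro continuous_intros) auto
    then show "((\<lambda>m. - exp (- (a * m powr d))) \<longlongrightarrow> - exp (- (a * l powr d))) (at_right l)"
      by (simp add: isCont_def filterlim_at_split)
    show "((\<lambda>m. - exp (- (a * m powr d))) \<longlongrightarrow> 0) at_top"
      using tendsto_minus[OF exp_neg_powr_at_top[OF assms(1,2)]] by simp
  qed (use assms in simp)
  then show ?thesis by simp
qed

lemma nn_integral_weibull_gap:
  fixes d a :: real
  assumes d: "0 < d" and a: "0 < a"
  shows "(\<integral>\<^sup>+m. ennreal (d * a * m powr (d - 1) * exp (- (a * m powr d)) * (1 - exp (- (m powr d))))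
            * indicator {0<..} m \<partial>lborel) = ennreal (1 / (1 + a))"
proof -
  define F where "F = (\<lambda>m::real. - exp (- (a * m powr d)) + a / (1 + a) * exp (- ((1 + a) * m powr d)))"
  have "(\<integral>\<^sup>+m. ennreal (d * a * m powr (d - 1) * exp (- (a * m powr d)) * (1 - exp (- (m powr d))))
            * indicator {0<..} m \<partial>lborel) = ennreal (0 - (- 1 + a / (1 + a)))"
  proof (rule nn_integral_FTC_Ioi[where F = F])
    fix x :: real assume x: "0 < x"
    have "(F has_real_derivative
        exp (- (a * x powr d)) * (a * (d * x powr (d - 1)))
        - a / (1 + a) * (exp (- ((1 + a) * x powr d)) * ((1 + a) * (d * x powr (d - 1))))) (at x)"
      unfolding F_def using x by (auto intro!: derivative_eq_intros has_real_derivative_powr)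
    moreover have "exp (- (a * x powr d)) * (a * (d * x powr (d - 1)))
        - a / (1 + a) * (exp (- ((1 + a) * x powr d)) * ((1 + a) * (d * x powr (d - 1))))
        = d * a * x powr (d - 1) * exp (- (a * x powr d)) * (1 - exp (- (x powr d)))"
    proof -
      have "exp (- ((1 + a) * x powr d)) = exp (- (a * x powr d)) * exp (- (x powr d))"
        by (simp add: exp_add[symmetric] algebra_simps)
      then show ?thesis using a by (simp add: field_simps)
    qed
    ultimately show "(F has_real_derivative
        d * a * x powr (d - 1) * exp (- (a * x powr d)) * (1 - exp (- (x powr d)))) (at x)"
      by simp
    show "isCont (\<lambda>m. d * a * m powr (d - 1) * exp (- (a * m powr d)) * (1 - exp (- (m powr d)))) x"
      using x by (intro continuous_intros) auto
    show "0 \<le> d * a * x powr (d - 1) * exp (- (a * x powr d)) * (1 - exp (- (x powr d)))"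
      using d a by (intro mult_nonneg_nonneg) auto
  next
    have "(F \<longlongrightarrow> - exp (- (a * 0)) + a / (1 + a) * exp (- ((1 + a) * 0))) (at_right 0)"
      unfolding F_def by (intro tendsto_intros powr_at_right_0 d)
    then show "(F \<longlongrightarrow> - 1 + a / (1 + a)) (at_right 0)" by simp
    have "(F \<longlongrightarrow> - 0 + a / (1 + a) * 0) at_top"
      unfolding F_def using a d by (intro tendsto_intros exp_neg_powr_at_top) auto
    then show "(F \<longlongrightarrow> 0) at_top" by simp
  qed
  also have "0 - (- 1 + a / (1 + a)) = 1 / (1 + a)"
    using a by (simp add: field_simps)
  finally show ?thesis .
qed

section \<open>The characteristic function of the Laplace law\<close>

lemma interval_integral_exp_cos:
  fixes s :: real
  shows "(LBINT x=0..\<infinity>. exp (- x) * cos (s * x)) = 1 / (1 + s\<^sup>2)"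
proof -
  define F where "F = (\<lambda>x::real. exp (- x) * (s * sin (s * x) - cos (s * x)) / (1 + s\<^sup>2))"
  have pos: "0 < 1 + s\<^sup>2" by (simp add: add_pos_nonneg)
  have "(LBINT x=0..\<infinity>. exp (- x) * cos (s * x)) = 0 - (- 1 / (1 + s\<^sup>2))"
  proof (rule interval_integral_FTC_integrable)
    fix x :: real
    have "((\<lambda>x. exp (- x) * (s * sin (s * x) - cos (s * x))) has_real_derivative
        (1 + s\<^sup>2) * (exp (- x) * cos (s * x))) (at x)"
      by (auto intro!: derivative_eq_intros simp: algebra_simps power2_eq_square)
    from DERIV_cdivide[OF this, of "1 + s\<^sup>2"]
    show "(F has_vector_derivative exp (- x) * cos (s * x)) (at x)"
      unfolding has_real_derivative_iff_has_vector_derivative[symmetric] F_def using pos by simp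
  next
    have "((\<lambda>x::real. - exp (- x)) \<longlongrightarrow> - exp (- 0)) (at_right 0)"
      by (intro tendsto_intros)
    moreover have "((\<lambda>x::real. - exp (- x)) \<longlongrightarrow> - 0) at_top"
      using tendsto_minus[OF exp_neg_mult_at_top[of 1]] by simp
    ultimately have "set_integrable lborel (einterval 0 \<infinity>) (\<lambda>x. exp (- x))"
      by (intro interval_integral_FTC_nonneg(1)[where F = "\<lambda>x. - exp (- x)" and A = "-1" and B = 0])
         (auto intro!: derivative_eq_intros simp: zero_ereal_def ereal_tendsto_simps)
    then show "set_integrable lborel (einterval 0 \<infinity>) (\<lambda>x. exp (- x) * cos (s * x))"
      by (rule set_integrable_bound) (auto simp: set_borel_measurable_def abs_mult)
    have "((\<lambda>x. F x) \<longlongrightarrow> F 0) (at_right 0)"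
      unfolding F_def by (intro tendsto_intros) (use pos in auto)
    then show "((F \<circ> real_of_ereal) \<longlongrightarrow> - 1 / (1 + s\<^sup>2)) (at_right 0)"
      unfolding zero_ereal_def ereal_tendsto_simps by (simp add: F_def)
    have "(F \<longlongrightarrow> 0) at_top"
    proof (rule tendsto_0_le[where K = "(\<bar>s\<bar> + 1) / (1 + s\<^sup>2)"])
      show "((\<lambda>x::real. exp (- x)) \<longlongrightarrow> (0::real)) at_top"
        using exp_neg_mult_at_top[of 1] by simp
      have "\<bar>s * sin (s * x) - cos (s * x)\<bar> \<le> \<bar>s\<bar> + 1" for x
      proof -
        have "\<bar>s * sin (s * x)\<bar> \<le> \<bar>s\<bar>" by (simp add: abs_mult mult_left_le)
        moreover have "\<bar>cos (s * x)\<bar> \<le> 1" by simp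
        ultimately show ?thesis by linarith
      qed
      then show "\<forall>\<^sub>F x in at_top. norm (F x) \<le> norm (exp (- x)) * ((\<bar>s\<bar> + 1) / (1 + s\<^sup>2))"
        using pos unfolding F_def
        by (intro always_eventually allI) (simp add: abs_mult divide_right_mono mult_left_mono)
    qed
    then show "((F \<circ> real_of_ereal) \<longlongrightarrow> 0) (at_left \<infinity>)"
      unfolding ereal_tendsto_simps .
  qed (auto intro!: continuous_intros)
  then show ?thesis by simp
qed

lemma lborel_integral_odd:
  fixes k :: "real \<Rightarrow> real"
  assumes "\<And>x. k (- x) = - k x"
  shows "(LBINT x. k x) = 0"
proof -
  have "(LBINT x. k x) = \<bar>-1\<bar> *\<^sub>R (LBINT x. k (0 + -1 * x))"
    by (rule lborel_integral_real_affine) simp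
  then show ?thesis using assms by simp
qed

lemma lborel_integral_even:
  fixes k :: "real \<Rightarrow> real"
  assumes k: "integrable lborel k" and even: "\<And>x. k (- x) = k x"
  shows "(LBINT x. k x) = 2 * (LBINT x. indicator {0<..} x * k x)"
proof -
  have km: "k \<in> borel_measurable borel" using borel_measurable_integrable[OF k] by simp
  have "(LBINT x. k x) = (LBINT x. indicator {0<..} x * k x + indicator {..<0} x * k x)"
    using AE_lborel_singleton[of 0] km
    by (intro integral_cong_AE) (auto split: split_indicator)
  also have "\<dots> = (LBINT x. indicator {0<..} x * k x) + (LBINT x. indicator {..<0} x * k x)"
    using integrable_mult_indicator[OF _ k] by (intro Bochner_Integration.integral_add) auto
  also have "(LBINT x. indicator {..<0} x * k x)
      = \<bar>-1\<bar> *\<^sub>R (LBINT x. indicator {..<0} (0 + -1 * x) * k (0 + -1 * x))"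
    by (rule lborel_integral_real_affine) simp
  also have "\<dots> = (LBINT x. indicator {0<..} x * k x)"
    using even by (simp add: indicator_def)
  finally show ?thesis by simp
qed

lemma (in prob_space) char_laplace:
  assumes X: "distributed M lborel X laplace_density"
  shows "char (distr M borel X) s = complex_of_real (1 / (1 + s\<^sup>2))"
proof -
  define g where "g = (\<lambda>x::real. exp (- \<bar>x\<bar>) / 2)"
  have gm: "g \<in> borel_measurable lborel" unfolding g_def by measurable
  have gnn: "AE x in lborel. 0 \<le> g x" unfolding g_def by simp
  have fm: "(\<lambda>x. iexp (s * x)) \<in> borel_measurable lborel" by measurable
  have "distr M borel X = distr M lborel X" by (rule distr_cong) simp_all
  also have "\<dots> = density lborel (\<lambda>x. ennreal (g x))"
    using X unfolding distributed_def laplace_density_def g_def by simp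
  finally have law: "distr M borel X = density lborel (\<lambda>x. ennreal (g x))" .
  interpret L: prob_space "density lborel (\<lambda>x. ennreal (g x))"
    unfolding law[symmetric] using X by (intro prob_space_distr) (simp add: distributed_def)
  have "integrable (density lborel (\<lambda>x. ennreal (g x))) (\<lambda>x. iexp (s * x))"
    by (intro L.integrable_const_bound[where B = 1]) (auto simp: norm_exp_i_times)
  then have int: "integrable lborel (\<lambda>x. g x *\<^sub>R iexp (s * x))"
    using integrable_density[OF fm gm gnn] by simp
  have char: "char (distr M borel X) s = (CLINT x|lborel. g x *\<^sub>R iexp (s * x))"
    unfolding char_def law by (rule integral_density[OF fm gm gnn])
  have cos_int: "integrable lborel (\<lambda>x. g x * cos (s * x))"
    using integrable_Re[OF int] by (simp add: Re_exp)
  have "Re (char (distr M borel X) s) = (LBINT x. g x * cos (s * x))"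
    unfolding char using integral_Re[OF int] by (simp add: Re_exp)
  also have "\<dots> = 2 * (LBINT x. indicator {0<..} x * (g x * cos (s * x)))"
    by (rule lborel_integral_even[OF cos_int]) (simp add: g_def)
  also have "\<dots> = (LBINT x=0..\<infinity>. exp (- x) * cos (s * x))"
    unfolding interval_lebesgue_integral_def set_lebesgue_integral_def einterval_def
    by (auto simp: zero_ereal_def g_def greaterThan_def[symmetric] indicator_def
        intro!: Bochner_Integration.integral_cong)
  also have "\<dots> = 1 / (1 + s\<^sup>2)" by (rule interval_integral_exp_cos)
  finally have re: "Re (char (distr M borel X) s) = 1 / (1 + s\<^sup>2)" .
  have "Im (char (distr M borel X) s) = (LBINT x. g x * sin (s * x))"
    unfolding char using integral_Im[OF int] by (simp add: Im_exp)
  also have "\<dots> = 0"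
    by (rule lborel_integral_odd) (simp add: g_def)
  finally show ?thesis using re by (intro complex_eqI) simp_all
qed

lemma (in prob_space) char_laplace_scale_mixture:
  assumes X: "distributed M lborel X laplace_density" and W: "random_variable borel W"
    and ind: "indep_var borel X borel W"
  shows "char (distr M borel (\<lambda>\<omega>. X \<omega> * W \<omega>)) t
       = complex_of_real (expectation (\<lambda>\<omega>. 1 / (1 + (t * W \<omega>)\<^sup>2)))"
proof -
  define PX where "PX = distr M borel X"
  define PW where "PW = distr M borel W"
  have Xm: "random_variable borel X"
    using X by (simp add: distributed_def)
  interpret PX: prob_space PX unfolding PX_def using Xm by (rule prob_space_distr)
  interpret PW: prob_space PW unfolding PW_def using W by (rule prob_space_distr)
  interpret PXW: pair_prob_space PX PW by unfold_locales
  have [measurable_cong]: "sets PX = sets borel" "sets PW = sets borel"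
    unfolding PX_def PW_def by simp_all
  have joint: "PX \<Otimes>\<^sub>M PW = distr M (borel \<Otimes>\<^sub>M borel) (\<lambda>\<omega>. (X \<omega>, W \<omega>))"
    using ind unfolding indep_var_distribution_eq PX_def PW_def by simp
  define g where "g = (\<lambda>q::real \<times> real. iexp (t * (fst q * snd q)))"
  have [measurable]: "g \<in> borel_measurable (borel \<Otimes>\<^sub>M borel)"
    unfolding g_def by measurable
  have "char (distr M borel (\<lambda>\<omega>. X \<omega> * W \<omega>)) t = (CLINT \<omega>|M. iexp (t * (X \<omega> * W \<omega>)))"
    unfolding char_def by (rule integral_distr) (use Xm W in measurable)
  also have "\<dots> = (CLINT \<omega>|M. g (X \<omega>, W \<omega>))"
    unfolding g_def by simp
  also have "\<dots> = (CLINT q|PX \<Otimes>\<^sub>M PW. g q)"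
    unfolding joint by (rule integral_distr[symmetric]) (use Xm W in measurable)
  also have "\<dots> = (CLINT w|PW. CLINT x|PX. g (x, w))"
  proof -
    have "complex_integrable (PX \<Otimes>\<^sub>M PW) g"
      by (intro PXW.P.integrable_const_bound[where B = 1]) (auto simp: g_def norm_exp_i_times)
    from PXW.integral_snd[of "\<lambda>x w. g (x, w)"] this show ?thesis by (simp add: case_prod_beta)
  qed
  also have "\<dots> = (CLINT w|PW. complex_of_real (1 / (1 + (t * w)\<^sup>2)))"
  proof (rule Bochner_Integration.integral_cong[OF refl])
    fix w :: real
    have "(CLINT x|PX. g (x, w)) = char PX (t * w)"
      unfolding char_def g_def by (simp add: mult_ac)
    then show "(CLINT x|PX. g (x, w)) = complex_of_real (1 / (1 + (t * w)\<^sup>2))"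
      unfolding PX_def using char_laplace[OF X] by simp
  qed
  also have "\<dots> = complex_of_real (LINT w|PW. 1 / (1 + (t * w)\<^sup>2))"
    by (rule integral_complex_of_real)
  also have "(LINT w|PW. 1 / (1 + (t * w)\<^sup>2)) = expectation (\<lambda>\<omega>. 1 / (1 + (t * W \<omega>)\<^sup>2))"
    unfolding PW_def by (rule integral_distr) (use W in measurable)
  finally show ?thesis .
qed

section \<open>Gamma densities and the law of \<open>Z\<close>\<close>

definition gamma_density :: "real \<Rightarrow> real \<Rightarrow> ennreal" where
  "gamma_density r x = (if 0 < x then ennreal (x powr (r - 1) * exp (- x) / Gamma r) else 0)"

lemma gamma_density_measurable [measurable]: "gamma_density r \<in> borel_measurable borel"
  unfolding gamma_density_def by measurable

lemma gamma_dist_eq_density: "gamma_dist r = density lborel (gamma_density r)"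
  unfolding gamma_dist_def gamma_density_def by simp

lemma sets_gamma_dist [simp, measurable_cong]: "sets (gamma_dist r) = sets borel"
  by (simp add: gamma_dist_def)

lemma sigma_finite_gamma_dist: "sigma_finite_measure (gamma_dist r)"
  unfolding gamma_dist_eq_density
  by (subst sigma_finite_measure.sigma_finite_iff_density_finite[OF lborel.sigma_finite_measure_axioms])
     (auto simp: gamma_density_def)

lemma AE_gamma_dist_pos: "AE x in gamma_dist r. 0 < x"
  unfolding gamma_dist_eq_density by (subst AE_density) (auto simp: gamma_density_def)

lemma nn_integral_gamma_laplace:
  assumes r: "0 < r" and s: "0 \<le> s"
  shows "(\<integral>\<^sup>+x. gamma_density r x * ennreal (exp (- (s * x))) \<partial>lborel) = ennreal ((1 + s) powr (- r))"
proof -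
  have "(\<integral>\<^sup>+x. gamma_density r x * ennreal (exp (- (s * x))) \<partial>lborel)
      = (\<integral>\<^sup>+x. ennreal (1 / Gamma r)
            * (ennreal (x powr (r - 1) * exp (- ((1 + s) * x))) * indicator {0<..} x) \<partial>lborel)"
    using r by (intro nn_integral_cong)
      (auto simp: gamma_density_def ennreal_mult'[symmetric] Gamma_real_pos exp_add[symmetric]
        field_simps indicator_def)
  also have "\<dots> = ennreal (1 / Gamma r) * ennreal (Gamma r * (1 + s) powr (- r))"
    using r s nn_integral_Gamma_Ioi[OF r, of "1 + s"] by (subst nn_integral_cmult) auto
  also have "\<dots> = ennreal ((1 + s) powr (- r))"
    using Gamma_real_pos[OF r] by (simp add: ennreal_mult'[symmetric] less_imp_le less_imp_neq[symmetric])
  finally show ?thesis .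
qed

lemma nn_integral_gamma_laplace_moment:
  assumes r: "0 < r" and s: "0 \<le> s"
  shows "(\<integral>\<^sup>+x. gamma_density r x * ennreal (x * exp (- (s * x))) \<partial>lborel)
       = ennreal (r * (1 + s) powr (- r - 1))"
proof -
  have "(\<integral>\<^sup>+x. gamma_density r x * ennreal (x * exp (- (s * x))) \<partial>lborel)
      = (\<integral>\<^sup>+x. ennreal (1 / Gamma r)
            * (ennreal (x powr ((r + 1) - 1) * exp (- ((1 + s) * x))) * indicator {0<..} x) \<partial>lborel)"
  proof (intro nn_integral_cong)
    fix x :: real
    have "0 < x \<Longrightarrow> x powr ((r + 1) - 1) = x powr (r - 1) * x"
      by (simp add: powr_diff)
    then show "gamma_density r x * ennreal (x * exp (- (s * x))) = ennreal (1 / Gamma r)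
        * (ennreal (x powr ((r + 1) - 1) * exp (- ((1 + s) * x))) * indicator {0<..} x)"
      using r by (cases "0 < x")
        (auto simp: gamma_density_def ennreal_mult'[symmetric] Gamma_real_pos exp_add[symmetric]
          field_simps indicator_def)
  qed
  also have "\<dots> = ennreal (1 / Gamma r) * ennreal (Gamma (r + 1) * (1 + s) powr (- (r + 1)))"
    using r s nn_integral_Gamma_Ioi[of "r + 1" "1 + s"] by (subst nn_integral_cmult) auto
  also have "Gamma (r + 1) = r * Gamma r"
    using r by (subst Gamma_plus1) (auto simp: nonpos_Ints_def)
  also have "ennreal (1 / Gamma r) * ennreal (r * Gamma r * (1 + s) powr (- (r + 1)))
      = ennreal (r * (1 + s) powr (- r - 1))"
    using r Gamma_real_pos[OF r] by (simp add: ennreal_mult'[symmetric] less_imp_le less_imp_neq[symmetric])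
  finally show ?thesis .
qed

lemma nn_integral_gamma_pair_sum_laplace:
  assumes r: "0 < r" and q: "0 < q" and a: "0 \<le> a" and b: "0 \<le> b"
  shows "(\<integral>\<^sup>+x. \<integral>\<^sup>+y. gamma_density r x * gamma_density q y * ennreal ((x + y) * exp (- (a * x + b * y)))
            \<partial>lborel \<partial>lborel)
       = ennreal (r * (1 + a) powr (- r - 1) * (1 + b) powr (- q)
            + (1 + a) powr (- r) * (q * (1 + b) powr (- q - 1)))"
proof -
  have split: "gamma_density r x * gamma_density q y * ennreal ((x + y) * exp (- (a * x + b * y)))
      = gamma_density r x * ennreal (x * exp (- (a * x))) * (gamma_density q y * ennreal (exp (- (b * y))))
      + gamma_density r x * ennreal (exp (- (a * x))) * (gamma_density q y * ennreal (y * exp (- (b * y))))"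
    for x y
  proof (cases "0 < x \<and> 0 < y")
    case True
    have "(x + y) * exp (- (a * x + b * y))
        = x * exp (- (a * x)) * exp (- (b * y)) + exp (- (a * x)) * (y * exp (- (b * y)))"
      by (simp add: exp_diff exp_minus field_simps)
    then have "ennreal ((x + y) * exp (- (a * x + b * y)))
        = ennreal (x * exp (- (a * x))) * ennreal (exp (- (b * y)))
        + ennreal (exp (- (a * x))) * ennreal (y * exp (- (b * y)))"
      using True by (simp add: ennreal_plus ennreal_mult)
    then show ?thesis by (simp add: distrib_left mult_ac)
  qed (auto simp: gamma_density_def)
  have "(\<integral>\<^sup>+x. \<integral>\<^sup>+y. gamma_density r x * gamma_density q y * ennreal ((x + y) * exp (- (a * x + b * y)))
            \<partial>lborel \<partial>lborel)
      = (\<integral>\<^sup>+x. gamma_density r x * ennreal (x * exp (- (a * x))) * ennreal ((1 + b) powr (- q))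
            + gamma_density r x * ennreal (exp (- (a * x))) * ennreal (q * (1 + b) powr (- q - 1)) \<partial>lborel)"
    unfolding split
    by (subst nn_integral_add nn_integral_cmult; measurable?)+
       (simp add: nn_integral_gamma_laplace[OF q b] nn_integral_gamma_laplace_moment[OF q b])
  also have "\<dots> = ennreal (r * (1 + a) powr (- r - 1)) * ennreal ((1 + b) powr (- q))
      + ennreal ((1 + a) powr (- r)) * ennreal (q * (1 + b) powr (- q - 1))"
    by (subst nn_integral_add nn_integral_multc; measurable?)+
       (simp add: nn_integral_gamma_laplace[OF r a] nn_integral_gamma_laplace_moment[OF r a])
  also have "\<dots> = ennreal (r * (1 + a) powr (- r - 1) * (1 + b) powr (- q)
            + (1 + a) powr (- r) * (q * (1 + b) powr (- q - 1)))"
    using r q by (simp add: ennreal_mult'[symmetric] ennreal_plus[symmetric] del: ennreal_plus)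
  finally show ?thesis .
qed

lemma DERIV_Z_resolvent_primitive:
  fixes \<nu> c x :: real
  assumes c: "0 \<le> c" and x: "0 < x"
  shows "((\<lambda>l. l * (1 + l) powr (\<nu> - 1) * (1 + l * (1 + c)) powr (- \<nu>)) has_real_derivative
           \<nu> * (1 + x * (1 + c)) powr (- \<nu> - 1) * (1 + x) powr (- (1 - \<nu>))
           + (1 + x * (1 + c)) powr (- \<nu>) * ((1 - \<nu>) * (1 + x) powr (- (1 - \<nu>) - 1))) (at x)"
proof -
  define p where "p = 1 + x * (1 + c)"
  define q where "q = 1 + x"
  have p: "0 < p" and q: "0 < q" using x c by (auto simp: p_def q_def add_pos_nonneg)
  have "((\<lambda>l. l * (1 + l) powr (\<nu> - 1) * (1 + l * (1 + c)) powr (- \<nu>)) has_real_derivative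
      q powr (\<nu> - 1) * p powr (- \<nu>)
      + x * ((\<nu> - 1) * q powr (\<nu> - 1 - 1)) * p powr (- \<nu>)
      + x * q powr (\<nu> - 1) * ((- \<nu>) * p powr (- \<nu> - 1) * (1 + c))) (at x)"
    using p q unfolding p_def q_def by (auto intro!: derivative_eq_intros simp: algebra_simps)
  moreover have "q powr (\<nu> - 1 - 1) = q powr (\<nu> - 1) / q" "q powr (- (1 - \<nu>) - 1) = q powr (\<nu> - 1) / q"
    "p powr (- \<nu> - 1) = p powr (- \<nu>) / p"
    using p q by (simp_all add: powr_diff power2_eq_square)
  moreover
  \<comment> \<open>the claim divided by \<open>q powr (\<nu> - 1) * p powr (- \<nu>)\<close> and multiplied by \<open>p * q\<close>\<close>
  have "q * p + x * (\<nu> - 1) * p - x * \<nu> * (1 + c) * q = \<nu> * q + (1 - \<nu>) * p"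
    unfolding p_def q_def by (simp add: algebra_simps)
  then have "A * B + x * ((\<nu> - 1) * (A / q)) * B + x * A * ((- \<nu>) * (B / p) * (1 + c))
      = \<nu> * (B / p) * A + B * ((1 - \<nu>) * (A / q))" for A B
    using p q by (simp add: field_simps) (metis distrib_left)
  ultimately show ?thesis unfolding p_def q_def by simp
qed

lemma Z_resolvent_primitive_at_top:
  fixes \<nu> c :: real
  assumes c: "0 \<le> c"
  shows "((\<lambda>l. l * (1 + l) powr (\<nu> - 1) * (1 + l * (1 + c)) powr (- \<nu>)) \<longlongrightarrow> (1 + c) powr (- \<nu>)) at_top"
proof -
  \<comment> \<open>substitute \<open>l = 1 / s\<close> and let \<open>s \<rightarrow> 0\<close>\<close>
  have "\<forall>\<^sub>F l in at_top. 1 / (inverse l + 1) * ((inverse l + 1) / (inverse l + (1 + c))) powr \<nu>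
      = l * (1 + l) powr (\<nu> - 1) * (1 + l * (1 + c)) powr (- \<nu>)"
  proof (rule eventually_mono[OF eventually_gt_at_top[of 0]])
    fix l :: real assume l: "0 < l"
    have pos: "0 < 1 + l * (1 + c)" using l c by (simp add: add_pos_nonneg)
    have inv1: "1 / (inverse l + 1) = l / (1 + l)" using l by (simp add: field_simps)
    have "(inverse l + 1) / (inverse l + (1 + c)) = (l * (inverse l + 1)) / (l * (inverse l + (1 + c)))"
      using l by simp
    also have "\<dots> = (1 + l) / (1 + l * (1 + c))"
      using l by (simp add: distrib_left)
    finally have inv2: "(inverse l + 1) / (inverse l + (1 + c)) = (1 + l) / (1 + l * (1 + c))" .
    show "1 / (inverse l + 1) * ((inverse l + 1) / (inverse l + (1 + c))) powr \<nu>
        = l * (1 + l) powr (\<nu> - 1) * (1 + l * (1 + c)) powr (- \<nu>)"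
      unfolding inv1 inv2 using l pos by (simp add: powr_divide powr_diff powr_minus divide_simps)
  qed
  moreover have "((\<lambda>l. 1 / (inverse l + 1) * ((inverse l + 1) / (inverse l + (1 + c))) powr \<nu>)
         \<longlongrightarrow> 1 / (0 + 1) * ((0 + 1) / (0 + (1 + c))) powr \<nu>) at_top"
    using c by (intro tendsto_intros tendsto_inverse_0_at_top filterlim_ident) auto
  ultimately show ?thesis
    using c by (auto simp: powr_divide powr_minus divide_simps elim: Lim_transform_eventually)
qed

lemma nn_integral_Z_resolvent_density:
  fixes \<nu> c :: real
  assumes nu: "0 < \<nu>" "\<nu> < 1" and c: "0 \<le> c"
  shows "(\<integral>\<^sup>+l. ennreal (\<nu> * (1 + l * (1 + c)) powr (- \<nu> - 1) * (1 + l) powr (- (1 - \<nu>))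
             + (1 + l * (1 + c)) powr (- \<nu>) * ((1 - \<nu>) * (1 + l) powr (- (1 - \<nu>) - 1)))
            * indicator {0<..} l \<partial>lborel) = ennreal ((1 + c) powr (- \<nu>))"
proof -
  have "(\<integral>\<^sup>+l. ennreal (\<nu> * (1 + l * (1 + c)) powr (- \<nu> - 1) * (1 + l) powr (- (1 - \<nu>))
             + (1 + l * (1 + c)) powr (- \<nu>) * ((1 - \<nu>) * (1 + l) powr (- (1 - \<nu>) - 1)))
            * indicator {0<..} l \<partial>lborel) = ennreal ((1 + c) powr (- \<nu>) - 0)"
  proof (rule nn_integral_FTC_Ioi[OF DERIV_Z_resolvent_primitive[OF c] _ _ _ Z_resolvent_primitive_at_top[OF c]])
    fix x :: real assume x: "0 < x"
    then have "0 < 1 + x * (1 + c)" using c by (simp add: add_pos_nonneg)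
    with x show "isCont (\<lambda>l. \<nu> * (1 + l * (1 + c)) powr (- \<nu> - 1) * (1 + l) powr (- (1 - \<nu>))
             + (1 + l * (1 + c)) powr (- \<nu>) * ((1 - \<nu>) * (1 + l) powr (- (1 - \<nu>) - 1))) x"
      by (intro continuous_intros) auto
    show "0 \<le> \<nu> * (1 + x * (1 + c)) powr (- \<nu> - 1) * (1 + x) powr (- (1 - \<nu>))
             + (1 + x * (1 + c)) powr (- \<nu>) * ((1 - \<nu>) * (1 + x) powr (- (1 - \<nu>) - 1))"
      using nu by (intro add_nonneg_nonneg mult_nonneg_nonneg) auto
  next
    have "((\<lambda>l. l * (1 + l) powr (\<nu> - 1) * (1 + l * (1 + c)) powr (- \<nu>))
        \<longlongrightarrow> 0 * (1 + 0) powr (\<nu> - 1) * (1 + 0 * (1 + c)) powr (- \<nu>)) (at_right 0)"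
      using c by (intro tendsto_intros) auto
    then show "((\<lambda>l. l * (1 + l) powr (\<nu> - 1) * (1 + l * (1 + c)) powr (- \<nu>)) \<longlongrightarrow> 0) (at_right 0)"
      by simp
  qed
  then show ?thesis by simp
qed

lemma Z_resolvent_nn_integral:
  fixes c g1 g2 :: real
  assumes "0 \<le> c" "0 < g1" "0 < g2"
  shows "ennreal (1 / (1 + c / ((g1 + g2) / g1)))
       = (\<integral>\<^sup>+l. ennreal ((g1 + g2) * exp (- (l * (1 + c) * g1 + l * g2))) * indicator {0<..} l \<partial>lborel)"
proof -
  define D where "D = (1 + c) * g1 + g2"
  have D: "0 < D" unfolding D_def using assms by (simp add: add_pos_pos)
  have "1 / (1 + c / ((g1 + g2) / g1)) = (g1 + g2) / D"
    unfolding D_def using assms by (simp add: field_simps)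
  also have "ennreal \<dots> = (\<integral>\<^sup>+l. ennreal ((g1 + g2) * exp (- (l * D))) * indicator {0<..} l \<partial>lborel)"
    using D assms by (simp add: nn_integral_exp_Ioi)
  finally show ?thesis unfolding D_def by (simp add: algebra_simps)
qed

lemma nn_integral_Z_dist_gamma:
  assumes "\<nu> \<noteq> 1" and [measurable]: "f \<in> borel_measurable borel"
  shows "(\<integral>\<^sup>+z. f z \<partial>Z_dist \<nu>) = (\<integral>\<^sup>+g1. \<integral>\<^sup>+g2.
           gamma_density \<nu> g1 * gamma_density (1 - \<nu>) g2 * f ((g1 + g2) / g1) \<partial>lborel \<partial>lborel)"
proof -
  interpret Q: sigma_finite_measure "gamma_dist (1 - \<nu>)" by (rule sigma_finite_gamma_dist)
  have "Z_dist \<nu> = distr (gamma_dist \<nu> \<Otimes>\<^sub>M gamma_dist (1 - \<nu>)) borel (\<lambda>(g1, g2). (g1 + g2) / g1)"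
    using assms(1) by (simp add: Z_dist_def)
  then have "(\<integral>\<^sup>+z. f z \<partial>Z_dist \<nu>)
      = (\<integral>\<^sup>+p. f ((\<lambda>(g1, g2). (g1 + g2) / g1) p) \<partial>(gamma_dist \<nu> \<Otimes>\<^sub>M gamma_dist (1 - \<nu>)))"
    by (simp add: nn_integral_distr)
  also have "\<dots> = (\<integral>\<^sup>+g1. \<integral>\<^sup>+g2. f ((g1 + g2) / g1) \<partial>gamma_dist (1 - \<nu>) \<partial>gamma_dist \<nu>)"
    by (subst Q.nn_integral_fst[symmetric]) (auto simp: case_prod_beta)
  also have "\<dots> = (\<integral>\<^sup>+g1. \<integral>\<^sup>+g2. gamma_density \<nu> g1 * gamma_density (1 - \<nu>) g2 * f ((g1 + g2) / g1)
      \<partial>lborel \<partial>lborel)"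
    unfolding gamma_dist_eq_density
    by (simp add: nn_integral_density nn_integral_cmult[symmetric] mult.assoc)
  finally show ?thesis .
qed

lemma nn_integral_Z_dist_resolvent:
  fixes \<nu> c :: real
  assumes nu: "0 < \<nu>" "\<nu> \<le> 1" and c: "0 \<le> c"
  shows "(\<integral>\<^sup>+z. ennreal (1 / (1 + c / z)) \<partial>Z_dist \<nu>) = ennreal ((1 + c) powr (- \<nu>))"
proof (cases "\<nu> = 1")
  case True
  then show ?thesis using c
    by (simp add: Z_dist_def nn_integral_return powr_minus_divide)
next
  case False
  with nu have nu1: "\<nu> < 1" by simp
  define K where "K = (\<lambda>g1 g2 l. gamma_density \<nu> g1 * gamma_density (1 - \<nu>) g2
      * ennreal ((g1 + g2) * exp (- (l * (1 + c) * g1 + l * g2))) * indicator {0<..} l)"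
  have resolvent: "gamma_density \<nu> g1 * gamma_density (1 - \<nu>) g2 * ennreal (1 / (1 + c / ((g1 + g2) / g1)))
      = (\<integral>\<^sup>+l. K g1 g2 l \<partial>lborel)" for g1 g2
  proof (cases "0 < g1 \<and> 0 < g2")
    case True
    have "(\<integral>\<^sup>+l. K g1 g2 l \<partial>lborel) = gamma_density \<nu> g1 * gamma_density (1 - \<nu>) g2
        * (\<integral>\<^sup>+l. ennreal ((g1 + g2) * exp (- (l * (1 + c) * g1 + l * g2))) * indicator {0<..} l \<partial>lborel)"
      unfolding K_def by (subst nn_integral_cmult[symmetric]) (auto simp: mult.assoc)
    then show ?thesis using Z_resolvent_nn_integral[OF c] True by simp
  qed (auto simp: K_def gamma_density_def)
  have "(\<integral>\<^sup>+z. ennreal (1 / (1 + c / z)) \<partial>Z_dist \<nu>) = (\<integral>\<^sup>+g1. \<integral>\<^sup>+g2.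
      gamma_density \<nu> g1 * gamma_density (1 - \<nu>) g2 * ennreal (1 / (1 + c / ((g1 + g2) / g1)))
      \<partial>lborel \<partial>lborel)"
    by (rule nn_integral_Z_dist_gamma[OF False]) measurable
  also have "\<dots> = (\<integral>\<^sup>+g1. \<integral>\<^sup>+g2. \<integral>\<^sup>+l. K g1 g2 l \<partial>lborel \<partial>lborel \<partial>lborel)"
    unfolding resolvent ..
  also have "\<dots> = (\<integral>\<^sup>+l. \<integral>\<^sup>+g1. \<integral>\<^sup>+g2. K g1 g2 l \<partial>lborel \<partial>lborel \<partial>lborel)"
    by (rule nn_integral_rotate_Fubini[OF lborel.sigma_finite_measure_axioms lborel.sigma_finite_measure_axioms
        lborel.sigma_finite_measure_axioms]) (unfold K_def, measurable)
  also have "\<dots> = (\<integral>\<^sup>+l. ennreal (\<nu> * (1 + l * (1 + c)) powr (- \<nu> - 1) * (1 + l) powr (- (1 - \<nu>))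
             + (1 + l * (1 + c)) powr (- \<nu>) * ((1 - \<nu>) * (1 + l) powr (- (1 - \<nu>) - 1)))
            * indicator {0<..} l \<partial>lborel)"
  proof (intro nn_integral_cong)
    fix l :: real
    show "(\<integral>\<^sup>+g1. \<integral>\<^sup>+g2. K g1 g2 l \<partial>lborel \<partial>lborel)
        = ennreal (\<nu> * (1 + l * (1 + c)) powr (- \<nu> - 1) * (1 + l) powr (- (1 - \<nu>))
             + (1 + l * (1 + c)) powr (- \<nu>) * ((1 - \<nu>) * (1 + l) powr (- (1 - \<nu>) - 1)))
            * indicator {0<..} l"
      using nn_integral_gamma_pair_sum_laplace[of \<nu> "1 - \<nu>" "l * (1 + c)" l] nu nu1 c
      by (cases "0 < l") (simp_all add: K_def)
  qed
  also have "\<dots> = ennreal ((1 + c) powr (- \<nu>))"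
    by (rule nn_integral_Z_resolvent_density[OF nu(1) nu1 c])
  finally show ?thesis .
qed

lemma AE_Z_dist_pos:
  assumes "0 < \<nu>" "\<nu> \<le> 1"
  shows "AE z in Z_dist \<nu>. 0 < z"
proof (cases "\<nu> = 1")
  case True
  then have "Z_dist \<nu> = return borel 1" by (simp add: Z_dist_def)
  then show ?thesis by (simp only:) (simp add: AE_return)
next
  case False
  then show ?thesis
    unfolding Z_dist_def
    by (simp, intro AE_distr_pair_measure[where A = "\<lambda>x. 0 < x" and B = "\<lambda>x. 0 < x"])
       (auto simp: sigma_finite_gamma_dist AE_gamma_dist_pos)
qed

section \<open>One-sided stable laws and the law of \<open>R\<close>\<close>

lemma one_sided_stableD:
  assumes "one_sided_stable \<delta> S"
  shows "prob_space S" and "sets S = sets borel" and "AE x in S. 0 \<le> x"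
    and "0 \<le> s \<Longrightarrow> (\<integral>x. exp (- (s * x)) \<partial>S) = exp (- (s powr \<delta>))"
  using assms unfolding one_sided_stable_def by auto

lemma one_sided_stable_integrable_exp:
  assumes "one_sided_stable \<delta> S" "0 \<le> s"
  shows "integrable S (\<lambda>x. exp (- (s * x)))"
proof (rule ccontr)
  assume "\<not> integrable S (\<lambda>x. exp (- (s * x)))"
  then have "(\<integral>x. exp (- (s * x)) \<partial>S) = 0" by (rule not_integrable_integral_eq)
  with one_sided_stableD(4)[OF assms] show False by simp
qed

lemma one_sided_stable_nn_laplace:
  assumes "one_sided_stable \<delta> S" "0 \<le> s"
  shows "(\<integral>\<^sup>+x. ennreal (exp (- (s * x))) \<partial>S) = ennreal (exp (- (s powr \<delta>)))"
  using nn_integral_eq_integral[OF one_sided_stable_integrable_exp[OF assms]]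
    one_sided_stableD(4)[OF assms] by simp

lemma AE_one_sided_stable_pos:
  assumes d: "0 < \<delta>" and S: "one_sided_stable \<delta> S"
  shows "AE x in S. 0 < x"
proof -
  interpret prob_space S by (rule one_sided_stableD(1)[OF S])
  have [measurable_cong]: "sets S = sets borel" by (rule one_sided_stableD(2)[OF S])
  have le: "measure S {0} \<le> exp (- (s powr \<delta>))" if s: "0 \<le> s" for s
  proof -
    have "emeasure S {0} = (\<integral>\<^sup>+x. indicator {0} x \<partial>S)"
      by (rule nn_integral_indicator[symmetric]) simp
    also have "\<dots> \<le> (\<integral>\<^sup>+x. ennreal (exp (- (s * x))) \<partial>S)"
      by (intro nn_integral_mono) (auto split: split_indicator)
    also have "\<dots> = ennreal (exp (- (s powr \<delta>)))" by (rule one_sided_stable_nn_laplace[OF S s])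
    finally show ?thesis by (simp add: emeasure_eq_measure)
  qed
  have "((\<lambda>s. exp (- (1 * s powr \<delta>))) \<longlongrightarrow> 0) at_top"
    by (rule exp_neg_powr_at_top[OF d]) simp
  then have "measure S {0} \<le> 0"
    by (rule tendsto_lowerbound) (use le in \<open>auto intro: eventually_mono[OF eventually_ge_at_top[of 0]]\<close>)
  then have "emeasure S {0} = 0" by (simp add: emeasure_eq_measure measure_nonneg antisym)
  then have "AE x in S. x \<noteq> 0"
    by (intro AE_I[where N = "{0}"]) (auto simp: sets_eq_imp_space_eq[OF \<open>sets S = sets borel\<close>])
  with one_sided_stableD(3)[OF S] show ?thesis by eventually_elim auto
qed

lemma one_sided_stable_nn_integral_moment_Ioo:
  assumes S: "one_sided_stable \<delta> S" and x: "0 < x"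
  shows "(\<integral>\<^sup>+l. (\<integral>\<^sup>+y. ennreal (y * exp (- (l * y))) \<partial>S) * indicator {0<..<x} l \<partial>lborel)
       = ennreal (1 - exp (- (x powr \<delta>)))"
proof -
  interpret S: prob_space S by (rule one_sided_stableD(1)[OF S])
  have [measurable_cong]: "sets S = sets borel" by (rule one_sided_stableD(2)[OF S])
  have "(\<integral>\<^sup>+l. (\<integral>\<^sup>+y. ennreal (y * exp (- (l * y))) \<partial>S) * indicator {0<..<x} l \<partial>lborel)
      = (\<integral>\<^sup>+l. \<integral>\<^sup>+y. ennreal (y * exp (- (l * y))) * indicator {0<..<x} l \<partial>S \<partial>lborel)"
    by (intro nn_integral_cong) (simp add: nn_integral_multc)
  also have "\<dots> = (\<integral>\<^sup>+y. \<integral>\<^sup>+l. ennreal (y * exp (- (l * y))) * indicator {0<..<x} l \<partial>lborel \<partial>S)"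
    by (rule pair_sigma_finite.Fubini')
       (simp_all add: pair_sigma_finite_def S.sigma_finite_measure_axioms lborel.sigma_finite_measure_axioms)
  also have "\<dots> = (\<integral>\<^sup>+y. ennreal (1 - exp (- (x * y))) \<partial>S)"
    using one_sided_stableD(3)[OF S]
    by (intro nn_integral_cong_AE) (auto elim!: eventually_mono simp: nn_integral_exp_Ioo[OF _ x])
  also have "\<dots> = ennreal (\<integral>y. 1 - exp (- (x * y)) \<partial>S)"
    using x one_sided_stableD(3)[OF S]
    by (intro nn_integral_eq_integral Bochner_Integration.integrable_diff
        one_sided_stable_integrable_exp[OF S]) (auto elim!: eventually_mono simp: mult_nonneg_nonneg)
  also have "(\<integral>y. 1 - exp (- (x * y)) \<partial>S) = 1 - exp (- (x powr \<delta>))"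
    using x by (subst Bochner_Integration.integral_diff)
      (auto intro: one_sided_stable_integrable_exp[OF S] simp: one_sided_stableD(4)[OF S] S.prob_space)
  finally show ?thesis .
qed

text \<open>With \<open>\<phi> l = exp (- (l powr \<delta>))\<close> the Laplace transform of \<open>S\<close>, the inner integral is
  \<open>- \<phi>' l\<close>. Instead of differentiating under the integral sign, \<open>exp (- (a * l powr \<delta>))\<close> is
  written as a tail integral and the order of integration swapped, so that only
  \<open>\<integral>\<^sub>0\<^sup>x - \<phi>' = 1 - \<phi> x\<close> is needed.\<close>

lemma one_sided_stable_nn_integral_weighted_moment:
  assumes d: "0 < \<delta>" and S: "one_sided_stable \<delta> S" and a: "0 < a"
  shows "(\<integral>\<^sup>+l. ennreal (exp (- (a * l powr \<delta>)))
            * ((\<integral>\<^sup>+y. ennreal (y * exp (- (l * y))) \<partial>S) * indicator {0<..} l) \<partial>lborel)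
       = ennreal (1 / (1 + a))"
proof -
  interpret S: prob_space S by (rule one_sided_stableD(1)[OF S])
  have [measurable_cong]: "sets S = sets borel" by (rule one_sided_stableD(2)[OF S])
  define m where "m = (\<lambda>l. \<integral>\<^sup>+y. ennreal (y * exp (- (l * y))) \<partial>S)"
  have [measurable]: "m \<in> borel_measurable borel"
    unfolding m_def by (rule S.borel_measurable_nn_integral) measurable
  define k where "k = (\<lambda>x::real. ennreal (\<delta> * a * x powr (\<delta> - 1) * exp (- (a * x powr \<delta>))))"
  have [measurable]: "k \<in> borel_measurable borel" unfolding k_def by measurable
  have [measurable]: "Measurable.pred (borel \<Otimes>\<^sub>M borel) (\<lambda>p::real \<times> real. fst p \<in> {snd p<..})"
    unfolding greaterThan_def mem_Collect_eq by measurable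
  have "(\<integral>\<^sup>+l. ennreal (exp (- (a * l powr \<delta>))) * (m l * indicator {0<..} l) \<partial>lborel)
      = (\<integral>\<^sup>+l. \<integral>\<^sup>+x. k x * indicator {l<..} x * (m l * indicator {0<..} l) \<partial>lborel \<partial>lborel)"
  proof (rule nn_integral_cong)
    fix l :: real
    show "ennreal (exp (- (a * l powr \<delta>))) * (m l * indicator {0<..} l)
        = (\<integral>\<^sup>+x. k x * indicator {l<..} x * (m l * indicator {0<..} l) \<partial>lborel)"
      by (cases "0 < l") (simp_all add: nn_integral_multc k_def nn_integral_weibull_tail[OF d a])
  qed
  also have "\<dots> = (\<integral>\<^sup>+x. \<integral>\<^sup>+l. k x * indicator {l<..} x * (m l * indicator {0<..} l) \<partial>lborel \<partial>lborel)"
    by (rule lborel_pair.Fubini') measurable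
  also have "\<dots> = (\<integral>\<^sup>+x. k x * ennreal (1 - exp (- (x powr \<delta>))) * indicator {0<..} x \<partial>lborel)"
  proof (rule nn_integral_cong)
    fix x :: real
    have "(\<integral>\<^sup>+l. k x * indicator {l<..} x * (m l * indicator {0<..} l) \<partial>lborel)
        = k x * (\<integral>\<^sup>+l. m l * indicator {0<..<x} l \<partial>lborel)"
      by (subst nn_integral_cmult[symmetric], measurable)
         (intro nn_integral_cong, auto simp: indicator_def mult_ac)
    also have "(\<integral>\<^sup>+l. m l * indicator {0<..<x} l \<partial>lborel)
        = ennreal (1 - exp (- (x powr \<delta>))) * indicator {0<..} x"
      by (cases "0 < x") (simp_all add: m_def one_sided_stable_nn_integral_moment_Ioo[OF S])
    finally show "(\<integral>\<^sup>+l. k x * indicator {l<..} x * (m l * indicator {0<..} l) \<partial>lborel)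
        = k x * ennreal (1 - exp (- (x powr \<delta>))) * indicator {0<..} x"
      by (simp add: mult.assoc)
  qed
  also have "\<dots> = ennreal (1 / (1 + a))"
    unfolding nn_integral_weibull_gap[OF d a, symmetric] k_def using d a
    by (intro nn_integral_cong) (simp add: ennreal_mult'[symmetric])
  finally show ?thesis unfolding m_def .
qed

lemma AE_R_dist_nonneg:
  assumes S: "one_sided_stable \<delta> S"
  shows "AE r in R_dist S. 0 \<le> r"
proof -
  interpret S: prob_space S by (rule one_sided_stableD(1)[OF S])
  show ?thesis
    unfolding R_dist_def
    by (intro AE_distr_pair_measure[where A = "\<lambda>x. 0 \<le> x" and B = "\<lambda>x. 0 \<le> x"])
       (auto simp: S.sigma_finite_measure_axioms one_sided_stableD[OF S])
qed

lemma ratio_resolvent_nn_integral: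
  fixes u x y :: real
  assumes "0 < u" "0 \<le> x" "0 < y"
  shows "ennreal (1 / (1 + u * (x / y))) = (\<integral>\<^sup>+l. ennreal (exp (- (l * u * x)))
           * (ennreal (y * exp (- (l * y))) * indicator {0<..} l) \<partial>lborel)"
proof -
  define D where "D = y + u * x"
  have D: "0 < D" unfolding D_def using assms by (simp add: add_pos_nonneg)
  have "1 / (1 + u * (x / y)) = y / D"
    unfolding D_def using assms by (simp add: field_simps)
  also have "ennreal \<dots> = (\<integral>\<^sup>+l. ennreal (y * exp (- (l * D))) * indicator {0<..} l \<partial>lborel)"
    using D assms by (simp add: nn_integral_exp_Ioi)
  also have "\<dots> = (\<integral>\<^sup>+l. ennreal (exp (- (l * u * x)))
      * (ennreal (y * exp (- (l * y))) * indicator {0<..} l) \<partial>lborel)"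
  proof (rule nn_integral_cong)
    fix l :: real
    have e: "y * exp (- (l * D)) = exp (- (l * u * x)) * (y * exp (- (l * y)))"
      unfolding D_def by (simp add: exp_add[symmetric] algebra_simps)
    show "ennreal (y * exp (- (l * D))) * indicator {0<..} l
        = ennreal (exp (- (l * u * x))) * (ennreal (y * exp (- (l * y))) * indicator {0<..} l)"
      unfolding e using assms by (simp add: ennreal_mult mult.assoc)
  qed
  finally show ?thesis .
qed

lemma nn_integral_R_dist:
  assumes "sigma_finite_measure S" and [measurable_cong]: "sets S = sets borel"
    and [measurable]: "f \<in> borel_measurable borel"
  shows "(\<integral>\<^sup>+r. f r \<partial>R_dist S) = (\<integral>\<^sup>+x. \<integral>\<^sup>+y. f (x / y) \<partial>S \<partial>S)"
proof -
  interpret S: sigma_finite_measure S by (rule assms(1))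
  have "(\<integral>\<^sup>+r. f r \<partial>R_dist S) = (\<integral>\<^sup>+p. f ((\<lambda>(x, y). x / y) p) \<partial>(S \<Otimes>\<^sub>M S))"
    unfolding R_dist_def by (rule nn_integral_distr) measurable
  also have "\<dots> = (\<integral>\<^sup>+x. \<integral>\<^sup>+y. f (x / y) \<partial>S \<partial>S)"
    by (subst S.nn_integral_fst[symmetric]) (auto simp: case_prod_beta)
  finally show ?thesis .
qed

lemma nn_integral_R_dist_resolvent:
  assumes d: "0 < \<delta>" and S: "one_sided_stable \<delta> S" and u: "0 < u"
  shows "(\<integral>\<^sup>+r. ennreal (1 / (1 + u * r)) \<partial>R_dist S) = ennreal (1 / (1 + u powr \<delta>))"
proof -
  interpret S: prob_space S by (rule one_sided_stableD(1)[OF S])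
  have [measurable_cong]: "sets S = sets borel" by (rule one_sided_stableD(2)[OF S])
  define h where "h = (\<lambda>x y l::real.
      ennreal (exp (- (l * u * x))) * (ennreal (y * exp (- (l * y))) * indicator {0<..} l))"
  have "(\<integral>\<^sup>+r. ennreal (1 / (1 + u * r)) \<partial>R_dist S)
      = (\<integral>\<^sup>+x. \<integral>\<^sup>+y. ennreal (1 / (1 + u * (x / y))) \<partial>S \<partial>S)"
    by (rule nn_integral_R_dist) (simp_all add: S.sigma_finite_measure_axioms one_sided_stableD(2)[OF S])
  also have "\<dots> = (\<integral>\<^sup>+x. \<integral>\<^sup>+y. \<integral>\<^sup>+l. h x y l \<partial>lborel \<partial>S \<partial>S)"
  proof (rule nn_integral_cong_AE)
    show "AE x in S. (\<integral>\<^sup>+y. ennreal (1 / (1 + u * (x / y))) \<partial>S) = (\<integral>\<^sup>+y. \<integral>\<^sup>+l. h x y l \<partial>lborel \<partial>S)"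
      using one_sided_stableD(3)[OF S]
    proof eventually_elim
      case (elim x)
      show ?case
        using AE_one_sided_stable_pos[OF d S]
        by (rule nn_integral_cong_AE[OF eventually_mono])
           (unfold h_def, rule ratio_resolvent_nn_integral[OF u elim])
    qed
  qed
  also have "\<dots> = (\<integral>\<^sup>+l. \<integral>\<^sup>+x. \<integral>\<^sup>+y. h x y l \<partial>S \<partial>S \<partial>lborel)"
    by (rule nn_integral_rotate_Fubini[OF S.sigma_finite_measure_axioms S.sigma_finite_measure_axioms
        lborel.sigma_finite_measure_axioms]) (unfold h_def, measurable)
  also have "\<dots> = (\<integral>\<^sup>+l. ennreal (exp (- (u powr \<delta> * l powr \<delta>)))
      * ((\<integral>\<^sup>+y. ennreal (y * exp (- (l * y))) \<partial>S) * indicator {0<..} l) \<partial>lborel)"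
  proof (rule nn_integral_cong)
    fix l :: real
    show "(\<integral>\<^sup>+x. \<integral>\<^sup>+y. h x y l \<partial>S \<partial>S) = ennreal (exp (- (u powr \<delta> * l powr \<delta>)))
        * ((\<integral>\<^sup>+y. ennreal (y * exp (- (l * y))) \<partial>S) * indicator {0<..} l)"
    proof (cases "0 < l")
      case True
      then have "(\<integral>\<^sup>+x. \<integral>\<^sup>+y. h x y l \<partial>S \<partial>S)
          = ennreal (exp (- ((l * u) powr \<delta>))) * (\<integral>\<^sup>+y. ennreal (y * exp (- (l * y))) \<partial>S)"
        unfolding h_def using u
        by (simp add: nn_integral_cmult nn_integral_multc one_sided_stable_nn_laplace[OF S])
      then show ?thesis using True u by (simp add: powr_mult mult.commute)
    qed (simp add: h_def)
  qed
  also have "\<dots> = ennreal (1 / (1 + u powr \<delta>))"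
    using one_sided_stable_nn_integral_weighted_moment[OF d S, of "u powr \<delta>"] u by simp
  finally show ?thesis .
qed

lemma nn_integral_R_dist_scaled_resolvent:
  fixes \<alpha> t z :: real
  assumes a: "0 < \<alpha>" and t: "t \<noteq> 0" and z: "0 < z" and S: "one_sided_stable (\<alpha> / 2) S"
  shows "(\<integral>\<^sup>+r. ennreal (1 / (1 + (t * (z powr (- 1 / \<alpha>) * sqrt r))\<^sup>2)) \<partial>R_dist S)
       = ennreal (1 / (1 + \<bar>t\<bar> powr \<alpha> / z))"
proof -
  define u where "u = t\<^sup>2 * z powr (- 2 / \<alpha>)"
  have u: "0 < u" unfolding u_def using t z by simp
  have "(z powr (- 1 / \<alpha>))\<^sup>2 = z powr (- 2 / \<alpha>)"
    using z by (simp add: power2_eq_square powr_add[symmetric] add_divide_distrib[symmetric])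
  then have "(t * (z powr (- 1 / \<alpha>) * sqrt r))\<^sup>2 = u * r" if "0 \<le> r" for r
    unfolding u_def using that by (simp add: power_mult_distrib)
  then have "(\<integral>\<^sup>+r. ennreal (1 / (1 + (t * (z powr (- 1 / \<alpha>) * sqrt r))\<^sup>2)) \<partial>R_dist S)
      = (\<integral>\<^sup>+r. ennreal (1 / (1 + u * r)) \<partial>R_dist S)"
    using AE_R_dist_nonneg[OF S] by (intro nn_integral_cong_AE) (auto elim!: eventually_mono)
  also have "\<dots> = ennreal (1 / (1 + u powr (\<alpha> / 2)))"
    by (rule nn_integral_R_dist_resolvent) (use a S u in auto)
  also have "u powr (\<alpha> / 2) = \<bar>t\<bar> powr \<alpha> / z"
  proof -
    have t2: "t\<^sup>2 = \<bar>t\<bar> powr 2" using t by (simp add: powr_numeral)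
    have "(t\<^sup>2) powr (\<alpha> / 2) = \<bar>t\<bar> powr \<alpha>" unfolding t2 powr_powr by simp
    moreover have "(z powr (- 2 / \<alpha>)) powr (\<alpha> / 2) = z powr (- 1)"
      unfolding powr_powr using a by simp
    moreover have "z powr (- 1) = 1 / z" using z by (simp add: powr_minus_divide)
    ultimately show ?thesis unfolding u_def using z t by (simp add: powr_mult)
  qed
  finally show ?thesis .
qed

lemma (in prob_space) expectation_scale_mixture_resolvent:
  fixes Z R :: "'a \<Rightarrow> real"
  assumes nu: "0 < \<nu>" "\<nu> \<le> 1" and a: "0 < \<alpha>"
    and Z: "random_variable borel Z" "distr M borel Z = Z_dist \<nu>"
    and R: "random_variable borel R" "distr M borel R = R_dist S" and S: "one_sided_stable (\<alpha> / 2) S"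
    and ind: "indep_var borel Z borel R"
  shows "expectation (\<lambda>\<omega>. 1 / (1 + (t * (Z \<omega> powr (- 1 / \<alpha>) * sqrt (R \<omega>)))\<^sup>2))
       = (1 + \<bar>t\<bar> powr \<alpha>) powr (- \<nu>)"
proof (cases "t = 0")
  case True
  then show ?thesis by (simp add: prob_space)
next
  case False
  define h where "h = (\<lambda>p::real \<times> real. ennreal (1 / (1 + (t * (fst p powr (- 1 / \<alpha>) * sqrt (snd p)))\<^sup>2)))"
  have [measurable]: "h \<in> borel_measurable (borel \<Otimes>\<^sub>M borel)" unfolding h_def by measurable
  interpret RS: prob_space "R_dist S"
    using prob_space_distr[OF R(1)] R(2) by simp
  have [measurable_cong]: "sets (Z_dist \<nu>) = sets borel" "sets (R_dist S) = sets borel"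
    by (simp_all add: Z(2)[symmetric] R(2)[symmetric])
  have joint: "Z_dist \<nu> \<Otimes>\<^sub>M R_dist S = distr M (borel \<Otimes>\<^sub>M borel) (\<lambda>\<omega>. (Z \<omega>, R \<omega>))"
    using ind unfolding indep_var_distribution_eq Z(2) R(2) by simp
  have "expectation (\<lambda>\<omega>. 1 / (1 + (t * (Z \<omega> powr (- 1 / \<alpha>) * sqrt (R \<omega>)))\<^sup>2))
      = enn2real (\<integral>\<^sup>+\<omega>. h (Z \<omega>, R \<omega>) \<partial>M)"
    unfolding h_def using Z(1) R(1) by (subst integral_eq_nn_integral) auto
  also have "(\<integral>\<^sup>+\<omega>. h (Z \<omega>, R \<omega>) \<partial>M) = (\<integral>\<^sup>+p. h p \<partial>(Z_dist \<nu> \<Otimes>\<^sub>M R_dist S))"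
    unfolding joint by (rule nn_integral_distr[symmetric]) (use Z(1) R(1) in measurable)
  also have "\<dots> = (\<integral>\<^sup>+z. \<integral>\<^sup>+r. h (z, r) \<partial>R_dist S \<partial>Z_dist \<nu>)"
    by (rule RS.nn_integral_fst[symmetric]) measurable
  also have "\<dots> = (\<integral>\<^sup>+z. ennreal (1 / (1 + \<bar>t\<bar> powr \<alpha> / z)) \<partial>Z_dist \<nu>)"
    using AE_Z_dist_pos[OF nu] nn_integral_R_dist_scaled_resolvent[OF a False _ S]
    by (intro nn_integral_cong_AE) (auto elim!: eventually_mono simp: h_def)
  also have "\<dots> = ennreal ((1 + \<bar>t\<bar> powr \<alpha>) powr (- \<nu>))"
    by (rule nn_integral_Z_dist_resolvent[OF nu]) simp
  finally show ?thesis by simp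
qed

theorem mainTheorem4:
  fixes \<nu> \<alpha> :: real and M :: "'a measure"
    and Lam Z R :: "'a \<Rightarrow> real" and S :: "real measure"
  assumes "0 < \<nu>" "\<nu> \<le> 1" "0 < \<alpha>" "\<alpha> \<le> 2"
    and "prob_space M"
    and "prob_space.indep_vars M (\<lambda>_. borel) (\<lambda>i. [Lam, Z, R] ! i) {0, 1, 2 :: nat}"
    and "distributed M lborel Lam laplace_density"
    and "distr M borel Z = Z_dist \<nu>"
    and "one_sided_stable (\<alpha> / 2) S"
    and "distr M borel R = R_dist S"
  shows "\<forall>t. char (distr M borel (\<lambda>\<omega>. Lam \<omega> * Z \<omega> powr (- 1 / \<alpha>) * sqrt (R \<omega>))) t
           = complex_of_real ((1 + \<bar>t\<bar> powr \<alpha>) powr (- \<nu>))"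
proof
  fix t :: real
  interpret prob_space M by (rule assms(5))
  define W where "W = (\<lambda>\<omega>. Z \<omega> powr (- 1 / \<alpha>) * sqrt (R \<omega>))"
  have rv: "random_variable borel Z" "random_variable borel R"
    using assms(6) unfolding indep_vars_def by (auto dest: bspec[of _ _ 1] bspec[of _ _ 2])
  have W: "random_variable borel W" unfolding W_def using rv by measurable
  have "(\<lambda>(z, r). z powr (- 1 / \<alpha>) * sqrt r) \<in> borel_measurable (borel \<Otimes>\<^sub>M borel)"
    by measurable
  note ind = indep_vars_three_split[OF assms(6) this]
  have "char (distr M borel (\<lambda>\<omega>. Lam \<omega> * Z \<omega> powr (- 1 / \<alpha>) * sqrt (R \<omega>))) t
      = char (distr M borel (\<lambda>\<omega>. Lam \<omega> * W \<omega>)) t"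
    unfolding W_def by (simp add: mult.assoc)
  also have "\<dots> = complex_of_real (expectation (\<lambda>\<omega>. 1 / (1 + (t * W \<omega>)\<^sup>2)))"
    using ind(1) unfolding W_def[symmetric] by (intro char_laplace_scale_mixture[OF assms(7) W])
  also have "expectation (\<lambda>\<omega>. 1 / (1 + (t * W \<omega>)\<^sup>2)) = (1 + \<bar>t\<bar> powr \<alpha>) powr (- \<nu>)"
    unfolding W_def using rv assms(8,10)
    by (intro expectation_scale_mixture_resolvent[OF assms(1-3) _ _ _ _ assms(9) ind(2)])
  finally show "char (distr M borel (\<lambda>\<omega>. Lam \<omega> * Z \<omega> powr (- 1 / \<alpha>) * sqrt (R \<omega>))) t
      = complex_of_real ((1 + \<bar>t\<bar> powr \<alpha>) powr (- \<nu>))" .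
qed

end
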